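(* Let $X_1,X_0$ be real random variables with densities $f_1,f_0$, and let $p_1,p_0>0$. For $b>0$ and $s\in\mathbb{R}$ define \[ \mathcal{O}_b(s)=p_1\log\mathbb{E}\Big[\Big(\tfrac{e^{sX_1}}{e^{sX_1}+e^{-sX_1}}\Big)^{b}\Big]+p_0\log\mathbb{E}\Big[\Big(\tfrac{e^{-sX_0}}{e^{sX_0}+e^{-sX_0}}\Big)^{b}\Big]. \] Assume $f_1(x)\ge f_1(-x)$ and $f_0(x)\le f_0(-x)$ for all $x\ge 0$. Then for every $b\ge 1$ the function $s\mapsto\mathcal{O}_b(s)$ is nondecreasing on $[0,\infty)$; in particular $\sup_{s\ge0}\mathcal{O}_b(s)=\lim_{s\to\infty}\mathcal{O}_b(s)$, i.e.\ the weighted estimator $\hat s_w(b)=\operatorname{argmax}\mathcal{O}_b$ equals $\infty$.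
   Context: $\mathcal{O}_b$ is the large-sample limit of the DRFit objective (entropy-weighted loss with $\rho_k=1$, no ridge term, $b=1/\alpha$) for one-dimensional logistic regression $\mathbb{P}(y=1\mid x)=e^{sx}/(e^{sx}+e^{-sx})$ on labelled data, where $X_k$ is the covariate distribution given (possibly erroneous) label $k$ and $p_k$ the probability of label $k$. *)

theory Defs
  imports "HOL-Analysis.Analysis"
begin

definition is_density :: "(real \<Rightarrow> real) \<Rightarrow> bool" where
  "is_density f \<longleftrightarrow> f \<in> borel_measurable lborel \<and> (\<forall>x. 0 \<le> f x)
     \<and> integrable lborel f \<and> (\<integral>x. f x \<partial>lborel) = 1"

definition dexp :: "(real \<Rightarrow> real) \<Rightarrow> (real \<Rightarrow> real) \<Rightarrow> real" where
  "dexp f g = (\<integral>x. f x * g x \<partial>lborel)"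

definition Obj :: "real \<Rightarrow> real \<Rightarrow> (real \<Rightarrow> real) \<Rightarrow> real \<Rightarrow> (real \<Rightarrow> real) \<Rightarrow> real \<Rightarrow> real" where
  "Obj b p1 f1 p0 f0 s =
     p1 * ln (dexp f1 (\<lambda>x. (exp (s*x) / (exp (s*x) + exp (-(s*x)))) powr b))
   + p0 * ln (dexp f0 (\<lambda>x. (exp (-(s*x)) / (exp (s*x) + exp (-(s*x)))) powr b))"

end

theory Submission
  imports Defs
begin

text \<open>
  Pair each point x \<ge> 0 with its mirror image -x. Writing u = \<sigma>(s x) \<ge> 1/2 with
  \<sigma>(y) = exp y / (exp y + exp (-y)), the pair contributes f(x) u^b + f(-x) (1 - u)^b to the
  expectation in the class-1 term. Its derivative in u is b (f(x) u^(b-1) - f(-x) (1 - u)^(b-1)),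
  which is nonnegative because f(x) \<ge> f(-x) and, for b \<ge> 1, u^(b-1) \<ge> (1 - u)^(b-1); since
  u increases with s, so does the expectation. Reflecting f0 turns the class-0 term into one
  of the same kind. Both expectations lie in (0, 1], so the objective is nondecreasing and
  bounded above by 0, and its limit at infinity is its supremum.
\<close>

definition sigmoid :: "real \<Rightarrow> real" where
  "sigmoid y = exp y / (exp y + exp (-y))"

lemma sigmoid_eq: "sigmoid y = 1 / (1 + exp (-2*y))"
proof -
  have "exp y / (exp y + exp (-y)) = 1 / (1 + exp (-y) / exp y)"
    by (simp add: field_simps add_pos_pos)
  also have "exp (-y) / exp y = exp (-2*y)"
    by (simp add: exp_diff[symmetric])
  finally show ?thesis
    by (simp add: sigmoid_def)
qed

lemma exp_plus_exp_minus_pos: "0 < exp y + exp (-y)" for y :: real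
  by (simp add: add_pos_pos)

lemma sigmoid_pos: "0 < sigmoid y"
  using exp_plus_exp_minus_pos[of y] by (simp add: sigmoid_def)

lemma sigmoid_less_1: "sigmoid y < 1"
  using exp_plus_exp_minus_pos[of y] by (simp add: sigmoid_def)

lemma sigmoid_minus: "sigmoid (-y) = 1 - sigmoid y"
  using exp_plus_exp_minus_pos[of y] unfolding sigmoid_def by (simp add: field_simps)

lemma sigmoid_mono: "y \<le> z \<Longrightarrow> sigmoid y \<le> sigmoid z"
  unfolding sigmoid_eq by (auto intro!: divide_left_mono add_pos_pos mult_pos_pos)

lemma sigmoid_ge_half: "0 \<le> y \<Longrightarrow> 1/2 \<le> sigmoid y"
  using sigmoid_mono[of 0 y] by (simp add: sigmoid_def)

lemma continuous_on_sigmoid: "continuous_on UNIV sigmoid"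
  unfolding sigmoid_def using exp_plus_exp_minus_pos
  by (intro continuous_intros) (metis less_irrefl)

lemma borel_measurable_sigmoid[measurable]: "sigmoid \<in> borel_measurable borel"
  using continuous_on_sigmoid by (rule borel_measurable_continuous_onI)

lemma sigmoid_powr_bounds: "0 \<le> b \<Longrightarrow> 0 \<le> sigmoid y powr b \<and> sigmoid y powr b \<le> 1"
  using sigmoid_pos[of y] sigmoid_less_1[of y] by (auto intro: powr_le1)

lemma weighted_powr_pair_mono:
  fixes a c b u v :: real
  assumes "c \<le> a" "0 \<le> c" "1 \<le> b" "1/2 \<le> u" "u \<le> v" "v < 1"
  shows "a * u powr b + c * (1 - u) powr b \<le> a * v powr b + c * (1 - v) powr b"
proof (rule DERIV_nonneg_imp_increasing_open[of u v])
  show "u \<le> v" by fact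
  fix w assume w: "u < w" "w < v"
  have w_pos: "0 < w" "0 < 1 - w" and w_half: "1 - w \<le> w"
    using w assms by auto
  have deriv: "DERIV (\<lambda>w. a * w powr b + c * (1 - w) powr b) w :>
      a * (b * w powr (b - 1) * 1) + c * (b * (1 - w) powr (b - 1) * (-1))"
    by (intro derivative_eq_intros DERIV_fun_powr) (use w_pos in auto)
  have "(1 - w) powr (b - 1) \<le> w powr (b - 1)"
    using w_pos w_half assms by (intro powr_mono2) auto
  then have "c * (1 - w) powr (b - 1) \<le> a * w powr (b - 1)"
    using assms by (intro mult_mono) auto
  then have "0 \<le> a * (b * w powr (b - 1) * 1) + c * (b * (1 - w) powr (b - 1) * (-1))"
    using assms by (simp add: algebra_simps)
  with deriv show "\<exists>y. DERIV (\<lambda>w. a * w powr b + c * (1 - w) powr b) w :> y \<and> 0 \<le> y"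
    by blast
next
  have "\<forall>w\<in>{u..v}. 0 < w \<and> 0 < 1 - w"
    using assms by auto
  then show "continuous_on {u..v} (\<lambda>w. a * w powr b + c * (1 - w) powr b)"
    by (intro continuous_intros) auto
qed

lemma lborel_integral_reflect: "(\<integral>x. f x \<partial>lborel) = (\<integral>x. f (-x) \<partial>lborel)"
  for f :: "real \<Rightarrow> real"
  by (subst lborel_integral_real_affine[where c="-1" and t=0]) auto

lemma lborel_integrable_reflect:
  "integrable lborel f \<Longrightarrow> integrable lborel (\<lambda>x. f (-x))" for f :: "real \<Rightarrow> real"
  using lborel_integrable_real_affine[where c="-1" and t=0 and f=f] by simp

lemma integrable_mult_sigmoid_powr:
  assumes "integrable lborel f" "0 \<le> b"
  shows "integrable lborel (\<lambda>x. f x * sigmoid (s*x) powr b)"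
proof (rule Bochner_Integration.integrable_bound[OF assms(1)])
  have [measurable]: "f \<in> borel_measurable lborel"
    using assms(1) by auto
  show "(\<lambda>x. f x * sigmoid (s*x) powr b) \<in> borel_measurable lborel"
    by measurable
  show "AE x in lborel. norm (f x * sigmoid (s*x) powr b) \<le> norm (f x)"
    using sigmoid_powr_bounds[OF assms(2), of "s*_"]
    by (auto simp: abs_mult intro!: mult_left_le)
qed

lemma mirrored_pair_mono:
  assumes nonneg: "\<forall>x. 0 \<le> f x" and dominant: "\<forall>x\<ge>0. f (-x) \<le> f x"
    and "1 \<le> b" and "0 \<le> s" "s \<le> t"
  shows "f x * sigmoid (s*x) powr b + f (-x) * sigmoid (s*(-x)) powr b
       \<le> f x * sigmoid (t*x) powr b + f (-x) * sigmoid (t*(-x)) powr b"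
proof -
  have nonneg_case: "f y * sigmoid (s*y) powr b + f (-y) * sigmoid (s*(-y)) powr b
       \<le> f y * sigmoid (t*y) powr b + f (-y) * sigmoid (t*(-y)) powr b" if "0 \<le> y" for y
  proof -
    have "sigmoid (s*y) \<le> sigmoid (t*y)"
      using assms that by (intro sigmoid_mono mult_right_mono) auto
    moreover have "1/2 \<le> sigmoid (s*y)"
      using assms that by (intro sigmoid_ge_half) auto
    ultimately show ?thesis
      using weighted_powr_pair_mono[of "f (-y)" "f y" b, OF _ _ _ _ _ sigmoid_less_1]
        nonneg dominant assms that
      by (simp add: sigmoid_minus)
  qed
  show ?thesis
  proof (cases "0 \<le> x")
    case True
    then show ?thesis using nonneg_case by blast
  next
    case False
    then show ?thesis using nonneg_case[of "-x"] by (simp add: algebra_simps)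
  qed
qed

definition sigmoid_moment :: "(real \<Rightarrow> real) \<Rightarrow> real \<Rightarrow> real \<Rightarrow> real" where
  "sigmoid_moment f b s = dexp f (\<lambda>x. sigmoid (s*x) powr b)"

lemma sigmoid_moment_symmetrized:
  assumes "integrable lborel f" "0 \<le> b"
  shows "2 * sigmoid_moment f b s
    = (\<integral>x. f x * sigmoid (s*x) powr b + f (-x) * sigmoid (s*(-x)) powr b \<partial>lborel)"
proof -
  have int: "integrable lborel (\<lambda>x. f x * sigmoid (s*x) powr b)"
    by (rule integrable_mult_sigmoid_powr[OF assms])
  have "(\<integral>x. f x * sigmoid (s*x) powr b + f (-x) * sigmoid (s*(-x)) powr b \<partial>lborel)
     = (\<integral>x. f x * sigmoid (s*x) powr b \<partial>lborel)
       + (\<integral>x. f (-x) * sigmoid (s*(-x)) powr b \<partial>lborel)"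
    using lborel_integrable_reflect[OF int] int by (intro Bochner_Integration.integral_add) auto
  also have "(\<integral>x. f (-x) * sigmoid (s*(-x)) powr b \<partial>lborel)
     = (\<integral>x. f x * sigmoid (s*x) powr b \<partial>lborel)"
    using lborel_integral_reflect[of "\<lambda>x. f x * sigmoid (s*x) powr b"] by simp
  finally show ?thesis
    by (simp add: sigmoid_moment_def dexp_def)
qed

lemma sigmoid_moment_mono:
  assumes "integrable lborel f" "\<forall>x. 0 \<le> f x" "\<forall>x\<ge>0. f (-x) \<le> f x"
    and "1 \<le> b" "0 \<le> s" "s \<le> t"
  shows "sigmoid_moment f b s \<le> sigmoid_moment f b t"
proof -
  have b: "0 \<le> b"
    using assms by simp
  have "integrable lborel (\<lambda>x. f x * sigmoid (r*x) powr b + f (-x) * sigmoid (r*(-x)) powr b)"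
    for r
    using integrable_mult_sigmoid_powr[OF assms(1) b]
      lborel_integrable_reflect[OF integrable_mult_sigmoid_powr[OF assms(1) b]]
    by auto
  then have "2 * sigmoid_moment f b s \<le> 2 * sigmoid_moment f b t"
    unfolding sigmoid_moment_symmetrized[OF assms(1) b]
    by (intro integral_mono mirrored_pair_mono[OF assms(2-6)])
  then show ?thesis
    by simp
qed

lemma sigmoid_moment_bounds:
  assumes "integrable lborel f" "\<forall>x. 0 \<le> f x" "\<forall>x\<ge>0. f (-x) \<le> f x"
    and "(\<integral>x. f x \<partial>lborel) = 1" "1 \<le> b" "0 \<le> s"
  shows "0 < sigmoid_moment f b s \<and> sigmoid_moment f b s \<le> 1"
proof
  have "sigmoid_moment f b 0 = (\<integral>x. f x * (1/2) powr b \<partial>lborel)"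
    by (simp add: sigmoid_moment_def dexp_def sigmoid_def)
  also have "\<dots> = (1/2) powr b"
    using assms(4) by simp
  finally have "0 < sigmoid_moment f b 0"
    by simp
  also have "sigmoid_moment f b 0 \<le> sigmoid_moment f b s"
    using sigmoid_moment_mono[OF assms(1-3,5) order.refl assms(6)] .
  finally show "0 < sigmoid_moment f b s" .
  have "sigmoid_moment f b s \<le> (\<integral>x. f x \<partial>lborel)"
    unfolding sigmoid_moment_def dexp_def using sigmoid_powr_bounds assms
    by (intro integral_mono integrable_mult_sigmoid_powr) (auto intro: mult_left_le)
  then show "sigmoid_moment f b s \<le> 1"
    using assms(4) by simp
qed

lemma Obj_eq_sigmoid_moments:
  "Obj b p1 f1 p0 f0 s
    = p1 * ln (sigmoid_moment f1 b s) + p0 * ln (sigmoid_moment (\<lambda>x. f0 (-x)) b s)"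
proof -
  have pos: "exp (s*x) / (exp (s*x) + exp (-(s*x))) = sigmoid (s*x)" for x
    by (simp add: sigmoid_def)
  have neg: "exp (-(s*x)) / (exp (s*x) + exp (-(s*x))) = sigmoid (s*(-x))" for x
    by (simp add: sigmoid_def add.commute)
  have "dexp f0 (\<lambda>x. sigmoid (s*(-x)) powr b) = sigmoid_moment (\<lambda>x. f0 (-x)) b s"
    unfolding dexp_def sigmoid_moment_def
    using lborel_integral_reflect[of "\<lambda>x. f0 x * sigmoid (s*(-x)) powr b"] by simp
  then show ?thesis
    unfolding Obj_def pos neg by (simp add: sigmoid_moment_def)
qed

lemma Obj_mono_nonpos:
  assumes "is_density f1" "is_density f0" "p1 > 0" "p0 > 0"
    and "\<forall>x\<ge>0. f1 x \<ge> f1 (-x)" "\<forall>x\<ge>0. f0 x \<le> f0 (-x)" "b \<ge> 1"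
    and "0 \<le> s" "s \<le> t"
  shows "Obj b p1 f1 p0 f0 s \<le> Obj b p1 f1 p0 f0 t \<and> Obj b p1 f1 p0 f0 t \<le> 0"
proof -
  define g where "g = (\<lambda>x. f0 (-x))"
  have f1: "integrable lborel f1" "\<forall>x. 0 \<le> f1 x" "\<forall>x\<ge>0. f1 (-x) \<le> f1 x"
      "(\<integral>x. f1 x \<partial>lborel) = 1"
    using assms(1,5) by (auto simp: is_density_def)
  have f0: "integrable lborel f0" "(\<integral>x. f0 x \<partial>lborel) = 1"
    using assms(2) by (auto simp: is_density_def)
  have g: "integrable lborel g" "\<forall>x. 0 \<le> g x" "\<forall>x\<ge>0. g (-x) \<le> g x"
      "(\<integral>x. g x \<partial>lborel) = 1"
    using assms(2,6) lborel_integrable_reflect[OF f0(1)] lborel_integral_reflect[of f0] f0(2)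
    by (auto simp: g_def is_density_def)
  have "0 \<le> t"
    using assms by simp
  have "ln (sigmoid_moment f1 b s) \<le> ln (sigmoid_moment f1 b t)"
      "ln (sigmoid_moment g b s) \<le> ln (sigmoid_moment g b t)"
      "ln (sigmoid_moment f1 b t) \<le> 0" "ln (sigmoid_moment g b t) \<le> 0"
    using sigmoid_moment_mono[OF f1(1-3) assms(7-9)] sigmoid_moment_mono[OF g(1-3) assms(7-9)]
      sigmoid_moment_bounds[OF f1 assms(7)] sigmoid_moment_bounds[OF g assms(7)]
      \<open>0 \<le> s\<close> \<open>0 \<le> t\<close>
    by auto
  then show ?thesis
    unfolding Obj_eq_sigmoid_moments g_def[symmetric] using assms(3,4)
    by (auto intro!: add_mono mult_left_mono add_nonpos_nonpos mult_nonneg_nonpos)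
qed

lemma tendsto_SUP_at_top_if_mono_on:
  fixes Q :: "'a::linorder \<Rightarrow> 'b::{conditionally_complete_linorder, linorder_topology}"
  assumes "mono_on {a..} Q" and "bdd_above (Q ` {a..})"
  shows "(Q \<longlongrightarrow> (SUP s\<in>{a..}. Q s)) at_top"
proof (rule order_tendstoI)
  fix y assume "y < (SUP s\<in>{a..}. Q s)"
  then obtain s0 where "a \<le> s0" "y < Q s0"
    using less_cSUP_iff[OF _ assms(2)] by auto
  moreover have "Q s0 \<le> Q s" if "s0 \<le> s" for s
    using assms(1) \<open>a \<le> s0\<close> that by (auto intro: mono_onD)
  ultimately show "\<forall>\<^sub>F s in at_top. y < Q s"
    unfolding eventually_at_top_linorder by (auto intro: less_le_trans)
next
  fix y assume "(SUP s\<in>{a..}. Q s) < y"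
  then show "\<forall>\<^sub>F s in at_top. Q s < y"
    unfolding eventually_at_top_linorder using cSUP_upper[OF _ assms(2)]
    by (intro exI[of _ a]) (auto intro: le_less_trans)
qed

theorem proposition3:
  fixes f1 f0 :: "real \<Rightarrow> real" and p1 p0 b :: real
  assumes "is_density f1" and "is_density f0"
    and "p1 > 0" and "p0 > 0"
    and "\<forall>x\<ge>0. f1 x \<ge> f1 (-x)"
    and "\<forall>x\<ge>0. f0 x \<le> f0 (-x)"
    and "b \<ge> 1"
  shows "mono_on {0..} (Obj b p1 f1 p0 f0)
    \<and> ((Obj b p1 f1 p0 f0) \<longlongrightarrow> (SUP s\<in>{0..}. Obj b p1 f1 p0 f0 s)) at_top"
proof -
  have mono: "mono_on {0..} (Obj b p1 f1 p0 f0)"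
    using Obj_mono_nonpos[OF assms] by (auto intro: mono_onI)
  have "bdd_above (Obj b p1 f1 p0 f0 ` {0..})"
    using Obj_mono_nonpos[OF assms _ order.refl] by (intro bdd_aboveI2[where M=0]) auto
  with mono show ?thesis
    using tendsto_SUP_at_top_if_mono_on by blast
qed

end
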